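(* Let $\mathcal G$ be a Lie superalgebra over a field of characteristic zero, with a direct sum decomposition $\mathcal G=\mathcal H\oplus\mathcal E$ of vector spaces where $\mathcal H$ is a subalgebra. Let $\mathcal S$, the projections $A\mapsto A_{\mathcal H}$, and the extended bracket $[\cdot,\cdot]$ be as described below. Then for any $A,B\in\mathcal S$, $[A_{\mathcal H},B_{\mathcal H}]=[A_{\mathcal H},B_{\mathcal H}]_{\mathcal H}$. Thus the subspace $\mathcal S_{\mathcal H}$ of the Lie superalgebra $(\mathcal S,[\cdot,\cdot])$ is a subalgebra.
   Context: Set $\mathcal U_1=\mathcal G$ with its $\mathbb Z_2$-grading. For $p\ge1$ define recursively $\mathcal U_{-p+1}=\mathrm{Hom}(\mathcal U_1,\mathcal U_{-p+2})$, $\mathbb Z_2$-graded by declaring $A$ even (resp. odd) if it preserves (resp. reverses) parity; $|u|$ is the parity of a homogeneous element. Elements of $\mathcal U_{1-p}$ are operators of order $p$ (elements of $\mathcal G$ have order $0$), identified for $p\ge1$ with $p$-linear maps $A(x_1,\dots,x_p)=A(x_1)\cdots(x_p)$; $\mathcal U_{1-}=\bigoplus_{p\ge0}\mathcal U_{1-p}$. An operator of order $p\ge2$ is symmetric if $A(\dots,x_i,x_{i+1},\dots)=(-1)^{|x_i||x_{i+1}|}A(\dots,x_{i+1},x_i,\dots)$ for all homogeneous arguments and all $i$; operators of order $0$ or $1$ are symmetric; $\mathcal S$ is the span of symmetric operators. Define $\circ$: $A\circ y=A(y)$, $y\circ A=0$ for $A$ of order $\ge1$, $y\in\mathcal U_1$;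 for $A,B$ of orders $\ge1$, recursively $(A\circ B)(x)=A\circ B(x)+(-1)^{|B||x|}A(x)\circ B$. Define $\bullet$: $A_p\bullet B_q=\frac{p!q!}{(p+q-1)!}A_p\circ B_q$ for orders $p,q\ge1$; $A_p\bullet x=pA_p(x)$, $x\bullet A_p=0$, $x\bullet y=0$ for $x,y\in\mathcal U_1$. The bracket of $\mathcal G$ extends to $\mathcal U_{1-}$: on $\mathcal G$ it is the given bracket, and for operators $A,B$ of orders $p,q$ with $p+q\ge1$, $[A,B]$ is the operator of order $p+q$ defined recursively by $[A,B]\bullet x=[A,B\bullet x]+(-1)^{|x||B|}[A\bullet x,B]$ for all $x\in\mathcal G$; $\mathcal S$ is closed under this bracket. For $x\in\mathcal G$ write $x=x_{\mathcal H}+x_{\mathcal E}$ with $x_{\mathcal H}\in\mathcal H$, $x_{\mathcal E}\in\mathcal E$. For an operator $A$ of order $\ge1$ define $A_{\mathcal H},A_{\mathcal E}$ recursively by $A_{\mathcal H}\bullet x=(A\bullet x)_{\mathcal H}$, $A_{\mathcal E}\bullet x=(A\bullet x)_{\mathcal E}$ for all $x\in\mathcal G$ (equivalently $A_{\mathcal H}(x_1,\dots,x_p)=(A(x_1,\dots,x_p))_{\mathcal H}$, similarly for $\mathcal E$). $\mathcal S_{\mathcal H}$ (resp. $\mathcal S_{\mathcal E}$) is the span of all $A_{\mathcal H}$ (resp. $A_{\mathcal E}$) with $A\in\mathcal S$. *)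

theory Defs
  imports Main "HOL.Vector_Spaces"
begin

text \<open>The field is a type 'k of class field_char_0; the superalgebra is the whole
  type 'g, a vector space via the scalar multiplication sc.  Parities are booleans
  (False = even, True = odd).\<close>

definition gpart :: "'g set \<Rightarrow> 'g set \<Rightarrow> bool \<Rightarrow> 'g set" where
  "gpart G0 G1 e = (if e then G1 else G0)"

definition sgn :: "bool \<Rightarrow> bool \<Rightarrow> 'k::field" where
  "sgn a b = (if a \<and> b then -1 else 1)"

definition lie_superalgebra ::
  "('k::field_char_0 \<Rightarrow> 'g::ab_group_add \<Rightarrow> 'g) \<Rightarrow> 'g set \<Rightarrow> 'g set \<Rightarrow> ('g \<Rightarrow> 'g \<Rightarrow> 'g) \<Rightarrow> bool" where
  "lie_superalgebra sc G0 G1 br \<longleftrightarrow>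
     vector_space sc \<and> module.subspace sc G0 \<and> module.subspace sc G1 \<and>
     G0 \<inter> G1 = {0} \<and> (\<forall>x. \<exists>a\<in>G0. \<exists>b\<in>G1. x = a + b) \<and>
     (\<forall>x y z. br (x + y) z = br x z + br y z) \<and>
     (\<forall>x y z. br x (y + z) = br x y + br x z) \<and>
     (\<forall>c x y. br (sc c x) y = sc c (br x y)) \<and>
     (\<forall>c x y. br x (sc c y) = sc c (br x y)) \<and>
     (\<forall>a b x y. x \<in> gpart G0 G1 a \<longrightarrow> y \<in> gpart G0 G1 b \<longrightarrow> br x y \<in> gpart G0 G1 (a \<noteq> b)) \<and>
     (\<forall>a b x y. x \<in> gpart G0 G1 a \<longrightarrow> y \<in> gpart G0 G1 b \<longrightarrow> br x y = - sc (sgn a b) (br y x)) \<and>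
     (\<forall>a b x y z. x \<in> gpart G0 G1 a \<longrightarrow> y \<in> gpart G0 G1 b \<longrightarrow>
        br x (br y z) = br (br x y) z + sc (sgn a b) (br y (br x z)))"

definition pproj :: "'g set \<Rightarrow> 'g set \<Rightarrow> bool \<Rightarrow> 'g::ab_group_add \<Rightarrow> 'g" where
  "pproj G0 G1 e x = (THE y. y \<in> gpart G0 G1 e \<and> x - y \<in> gpart G0 G1 (\<not> e))"

text \<open>An operator of order p is represented by its p-linear map A(x1,...,xp),
  i.e. a function on argument lists, required to vanish on lists of length \<noteq> p.
  An operator of order 0 is an element y of G, represented by the function
  sending [] to y.\<close>

definition op_ml :: "('k::field \<Rightarrow> 'g::ab_group_add \<Rightarrow> 'g) \<Rightarrow> nat \<Rightarrow> ('g list \<Rightarrow> 'g) \<Rightarrow> bool" where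
  "op_ml sc p f \<longleftrightarrow>
     (\<forall>xs. length xs \<noteq> p \<longrightarrow> f xs = 0) \<and>
     (\<forall>as bs c x y. length as + length bs + 1 = p \<longrightarrow>
        f (as @ (sc c x + y) # bs) = sc c (f (as @ x # bs)) + f (as @ y # bs))"

text \<open>Parity-f part of an operator of order p: on homogeneous arguments of parities es,
  take the component of parity f + sum es; extend multilinearly.\<close>
definition opar :: "'g set \<Rightarrow> 'g set \<Rightarrow> nat \<Rightarrow> ('g::ab_group_add list \<Rightarrow> 'g) \<Rightarrow> bool \<Rightarrow> 'g list \<Rightarrow> 'g" where
  "opar G0 G1 p A f = (\<lambda>xs. if length xs = p then
      (\<Sum>es\<in>{es::bool list. length es = p}.
          pproj G0 G1 (foldr (\<noteq>) es f) (A (map2 (pproj G0 G1) es xs)))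
      else 0)"

definition bsum2 :: "(bool \<Rightarrow> bool \<Rightarrow> 'g::comm_monoid_add) \<Rightarrow> 'g" where
  "bsum2 F = F False False + F False True + F True False + F True True"

text \<open>The bracket of an operator A of order p with an operator B of order q,
  defined by the recursion
   [A,B] \<bullet> x = [A, B \<bullet> x] + (-1)^(|x||B|) [A \<bullet> x, B],
  with A \<bullet> x = p A(x) and y \<bullet> x = 0 for y of order 0, i.e.
   (p+q) [A,B](x) = q [A, B(x)] + p (-1)^(|x||B|) [A(x), B],
  extended bilinearly to non-homogeneous x and B.\<close>
function brk :: "('k::field_char_0 \<Rightarrow> 'g::ab_group_add \<Rightarrow> 'g) \<Rightarrow> 'g set \<Rightarrow> 'g set \<Rightarrow> ('g \<Rightarrow> 'g \<Rightarrow> 'g)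
     \<Rightarrow> nat \<Rightarrow> nat \<Rightarrow> ('g list \<Rightarrow> 'g) \<Rightarrow> ('g list \<Rightarrow> 'g) \<Rightarrow> 'g list \<Rightarrow> 'g" where
  "brk sc G0 G1 br p q A B = (\<lambda>xs.
     if p = 0 \<and> q = 0 then (if xs = [] then br (A []) (B []) else 0)
     else if length xs \<noteq> p + q then 0
     else sc (1 / of_nat (p + q))
           ((if q = 0 then 0 else
               sc (of_nat q) (brk sc G0 G1 br p (q - 1) A (\<lambda>zs. B (hd xs # zs)) (tl xs)))
          + (if p = 0 then 0 else
               sc (of_nat p) (bsum2 (\<lambda>e f. sc (sgn e f)
                  (brk sc G0 G1 br (p - 1) q (\<lambda>zs. A (pproj G0 G1 e (hd xs) # zs))
                       (opar G0 G1 q B f) (tl xs)))))))"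
  by pat_completeness auto
termination
  by (relation "measure (\<lambda>(_, _, _, _, p, q, _, _). p + q)") auto

text \<open>An element of U_{1-} = \<Oplus>_p U_{1-p}: a family of operators indexed by the order p,
  finitely many nonzero.\<close>
definition in_U :: "('k::field \<Rightarrow> 'g::ab_group_add \<Rightarrow> 'g) \<Rightarrow> (nat \<Rightarrow> 'g list \<Rightarrow> 'g) \<Rightarrow> bool" where
  "in_U sc A \<longleftrightarrow> finite {p. A p \<noteq> (\<lambda>_. 0)} \<and> (\<forall>p. op_ml sc p (A p))"

definition ubr :: "('k::field_char_0 \<Rightarrow> 'g::ab_group_add \<Rightarrow> 'g) \<Rightarrow> 'g set \<Rightarrow> 'g set \<Rightarrow> ('g \<Rightarrow> 'g \<Rightarrow> 'g)
     \<Rightarrow> (nat \<Rightarrow> 'g list \<Rightarrow> 'g) \<Rightarrow> (nat \<Rightarrow> 'g list \<Rightarrow> 'g) \<Rightarrow> nat \<Rightarrow> 'g list \<Rightarrow> 'g" where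
  "ubr sc G0 G1 br A B = (\<lambda>n xs. \<Sum>p\<le>n. brk sc G0 G1 br p (n - p) (A p) (B (n - p)) xs)"

definition symmetric_op :: "('k::field \<Rightarrow> 'g::ab_group_add \<Rightarrow> 'g) \<Rightarrow> 'g set \<Rightarrow> 'g set \<Rightarrow> nat \<Rightarrow> ('g list \<Rightarrow> 'g) \<Rightarrow> bool" where
  "symmetric_op sc G0 G1 p f \<longleftrightarrow>
     (2 \<le> p \<longrightarrow> (\<forall>xs es i. length xs = p \<longrightarrow> length es = p \<longrightarrow>
        (\<forall>j<p. xs ! j \<in> gpart G0 G1 (es ! j)) \<longrightarrow> Suc i < p \<longrightarrow>
        f xs = sc (sgn (es ! i) (es ! Suc i)) (f (xs[i := xs ! Suc i, Suc i := xs ! i]))))"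

inductive_set Sspan :: "('k::field \<Rightarrow> 'g::ab_group_add \<Rightarrow> 'g) \<Rightarrow> 'g set \<Rightarrow> 'g set \<Rightarrow> (nat \<Rightarrow> 'g list \<Rightarrow> 'g) set"
  for sc G0 G1 where
  zero: "(\<lambda>_ _. 0) \<in> Sspan sc G0 G1"
| gen: "op_ml sc p f \<Longrightarrow> symmetric_op sc G0 G1 p f \<Longrightarrow>
          (\<lambda>n. if n = p then f else (\<lambda>_. 0)) \<in> Sspan sc G0 G1"
| add: "A \<in> Sspan sc G0 G1 \<Longrightarrow> B \<in> Sspan sc G0 G1 \<Longrightarrow> (\<lambda>n xs. A n xs + B n xs) \<in> Sspan sc G0 G1"
| smul: "A \<in> Sspan sc G0 G1 \<Longrightarrow> (\<lambda>n xs. sc c (A n xs)) \<in> Sspan sc G0 G1"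

definition hproj :: "'g set \<Rightarrow> 'g set \<Rightarrow> 'g::ab_group_add \<Rightarrow> 'g" where
  "hproj H E x = (THE h. h \<in> H \<and> x - h \<in> E)"

definition uproj :: "'g set \<Rightarrow> 'g set \<Rightarrow> (nat \<Rightarrow> 'g::ab_group_add list \<Rightarrow> 'g) \<Rightarrow> nat \<Rightarrow> 'g list \<Rightarrow> 'g" where
  "uproj H E A = (\<lambda>n xs. hproj H E (A n xs))"

end

theory Submission
  imports Defs
begin

text \<open>The bracket of two operators is computed, by its defining recursion, from brackets in
  \<open>\<G>\<close> of their values and of the parity components of their values.  Since \<open>\<H>\<close> is a
  subalgebra closed under the parity projections, the bracket of two \<open>\<H>\<close>-valued operators is
  again \<open>\<H>\<close>-valued, and projecting it onto \<open>\<H>\<close> along \<open>\<E>\<close> changes nothing.\<close>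

lemma (in module) the_complement_component_eq:
  assumes "subspace P" and "subspace Q" and "P \<inter> Q = {0}"
    and "p \<in> P" and "x - p \<in> Q"
  shows "(THE y. y \<in> P \<and> x - y \<in> Q) = p"
proof (rule the_equality)
  show "p \<in> P \<and> x - p \<in> Q" using assms(4,5) ..
next
  fix y assume y: "y \<in> P \<and> x - y \<in> Q"
  have "y - p \<in> P" using subspace_diff[OF assms(1)] y assms(4) by blast
  moreover have "(x - p) - (x - y) \<in> Q" using subspace_diff[OF assms(2,5)] y by blast
  then have "y - p \<in> Q" by (simp add: algebra_simps)
  ultimately have "y - p = 0" using assms(3) by blast
  then show "y = p" by simp
qed

lemma hproj_eq:
  assumes "module sc" and "module.subspace sc H" and "module.subspace sc E"
    and "H \<inter> E = {0}" and "h \<in> H" and "x - h \<in> E"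
  shows "hproj H E x = h"
proof -
  interpret module sc by fact
  show ?thesis
    unfolding hproj_def using the_complement_component_eq[OF assms(2-6)] .
qed

lemma hproj_mem:
  assumes "module sc" and "module.subspace sc H" and "module.subspace sc E"
    and "H \<inter> E = {0}" and "\<forall>x. \<exists>h\<in>H. \<exists>e\<in>E. x = h + e"
  shows "hproj H E x \<in> H"
proof -
  obtain h e where "h \<in> H" "e \<in> E" "x = h + e" using assms(5) by blast
  then show ?thesis using hproj_eq[OF assms(1-4)] by simp
qed

lemma pproj_eq:
  assumes L: "lie_superalgebra sc G0 G1 br"
    and "y \<in> gpart G0 G1 e" and "x - y \<in> gpart G0 G1 (\<not> e)"
  shows "pproj G0 G1 e x = y"
proof -
  interpret vector_space sc using L by (simp add: lie_superalgebra_def)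
  have "subspace G0" "subspace G1" "G0 \<inter> G1 = {0}"
    using L by (simp_all add: lie_superalgebra_def)
  then have "subspace (gpart G0 G1 e)" "subspace (gpart G0 G1 (\<not> e))"
    and "gpart G0 G1 e \<inter> gpart G0 G1 (\<not> e) = {0}"
    by (cases e; simp add: gpart_def Int_commute)+
  then show ?thesis
    unfolding pproj_def using assms(2,3) by (rule the_complement_component_eq)
qed

lemma pproj_mem_graded_subspace:
  assumes L: "lie_superalgebra sc G0 G1 br" and W: "module.subspace sc W"
    and even: "\<forall>w\<in>W. pproj G0 G1 False w \<in> W" and w: "w \<in> W"
  shows "pproj G0 G1 e w \<in> W"
proof -
  interpret vector_space sc using L by (simp add: lie_superalgebra_def)
  have "\<forall>x. \<exists>a\<in>G0. \<exists>b\<in>G1. x = a + b"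
    using L by (simp add: lie_superalgebra_def)
  then obtain a b where ab: "a \<in> G0" "b \<in> G1" "w = a + b" by blast
  have a: "pproj G0 G1 False w = a" and b: "pproj G0 G1 True w = b"
    using pproj_eq[OF L] ab by (simp_all add: gpart_def)
  have "a \<in> W" using bspec[OF even w] unfolding a .
  moreover have "b \<in> W" using subspace_diff[OF W w \<open>a \<in> W\<close>] ab(3) by simp
  ultimately show ?thesis using a b by (cases e) simp_all
qed

lemma opar_mem_subspace:
  assumes "vector_space sc" and W: "module.subspace sc W"
    and par: "\<forall>e. \<forall>w\<in>W. pproj G0 G1 e w \<in> W" and B: "\<forall>zs. B zs \<in> W"
  shows "opar G0 G1 q B f xs \<in> W"
proof -
  interpret vector_space sc by fact
  show ?thesis
    unfolding opar_def using par B
    by (auto intro!: subspace_sum[OF W] simp: subspace_0[OF W])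
qed

declare brk.simps [simp del]

lemma brk_mem_subspace_step:
  assumes "vector_space sc" and W: "module.subspace sc W"
    and br_closed: "\<forall>x\<in>W. \<forall>y\<in>W. br x y \<in> W"
    and A: "\<forall>zs. A zs \<in> W" and B: "\<forall>zs. B zs \<in> W"
    and left: "\<lbrakk>\<not> (p = 0 \<and> q = 0); length xs = p + q; q \<noteq> 0\<rbrakk> \<Longrightarrow>
      brk sc G0 G1 br p (q - 1) A (\<lambda>zs. B (hd xs # zs)) (tl xs) \<in> W"
    and right: "\<And>e f. \<lbrakk>\<not> (p = 0 \<and> q = 0); length xs = p + q; p \<noteq> 0\<rbrakk> \<Longrightarrow>
      brk sc G0 G1 br (p - 1) q (\<lambda>zs. A (pproj G0 G1 e (hd xs) # zs)) (opar G0 G1 q B f) (tl xs)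
        \<in> W"
  shows "brk sc G0 G1 br p q A B xs \<in> W"
proof -
  interpret vector_space sc by fact
  have W_closed: "0 \<in> W" "\<And>x y. x \<in> W \<Longrightarrow> y \<in> W \<Longrightarrow> x + y \<in> W"
      "\<And>c x. x \<in> W \<Longrightarrow> sc c x \<in> W"
    using subspace_0[OF W] subspace_add[OF W] subspace_scale[OF W] by auto
  note brk_eq = brk.simps[of sc G0 G1 br p q A B]
  show ?thesis
  proof (cases "p = 0 \<and> q = 0")
    case True
    then show ?thesis
      using A B br_closed unfolding brk_eq by (simp add: W_closed)
  next
    case nonbase: False
    show ?thesis
    proof (cases "length xs = p + q")
      case True
      have "(if q = 0 then 0 else
          sc (of_nat q) (brk sc G0 G1 br p (q - 1) A (\<lambda>zs. B (hd xs # zs)) (tl xs))) \<in> W"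
        using left[OF nonbase True] by (simp add: W_closed)
      moreover have "(if p = 0 then 0 else
          sc (of_nat p) (bsum2 (\<lambda>e f. sc (sgn e f)
            (brk sc G0 G1 br (p - 1) q (\<lambda>zs. A (pproj G0 G1 e (hd xs) # zs))
              (opar G0 G1 q B f) (tl xs))))) \<in> W"
        using right[OF nonbase True] by (simp add: bsum2_def W_closed)
      ultimately show ?thesis
        unfolding brk_eq using True
        by (simp only: if_not_P[OF nonbase] True simp_thms if_False)
          (rule W_closed(3), rule W_closed(2))
    next
      case False
      show ?thesis
        unfolding brk_eq by (simp only: if_not_P[OF nonbase] if_P[OF False] W_closed(1))
    qed
  qed
qed

lemma brk_mem_subspace:
  assumes "vector_space sc" and "module.subspace sc W"
    and "\<forall>x\<in>W. \<forall>y\<in>W. br x y \<in> W"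
    and "\<forall>e. \<forall>w\<in>W. pproj G0 G1 e w \<in> W"
    and "\<forall>zs. A zs \<in> W" and "\<forall>zs. B zs \<in> W"
  shows "brk sc G0 G1 br p q A B xs \<in> W"
  using assms
proof (induction sc G0 G1 br p q A B arbitrary: xs rule: brk.induct)
  case (1 sc G0 G1 br p q A B)
  show ?case
  proof (rule brk_mem_subspace_step[OF "1.prems"(1-3,5,6)])
    show "brk sc G0 G1 br p (q - 1) A (\<lambda>zs. B (hd xs # zs)) (tl xs) \<in> W"
      if "\<not> (p = 0 \<and> q = 0)" "length xs = p + q" "q \<noteq> 0"
      using "1.IH"(1) that "1.prems" by simp
    show "brk sc G0 G1 br (p - 1) q (\<lambda>zs. A (pproj G0 G1 e (hd xs) # zs))
        (opar G0 G1 q B f) (tl xs) \<in> W"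
      if "\<not> (p = 0 \<and> q = 0)" "length xs = p + q" "p \<noteq> 0" for e f
    proof (rule "1.IH"(2))
      show "\<forall>zs. A (pproj G0 G1 e (hd xs) # zs) \<in> W" using "1.prems"(5) by blast
      show "\<forall>zs. opar G0 G1 q B f zs \<in> W"
        using opar_mem_subspace[OF "1.prems"(1,2,4,6)] by blast
    qed (use that "1.prems" in simp_all)
  qed
qed

lemma ubr_mem_subspace:
  assumes "vector_space sc" and "module.subspace sc W"
    and "\<forall>x\<in>W. \<forall>y\<in>W. br x y \<in> W"
    and "\<forall>e. \<forall>w\<in>W. pproj G0 G1 e w \<in> W"
    and "\<forall>n zs. A n zs \<in> W" and "\<forall>n zs. B n zs \<in> W"
  shows "ubr sc G0 G1 br A B n xs \<in> W"
proof -
  interpret vector_space sc by fact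
  have "brk sc G0 G1 br p (n - p) (A p) (B (n - p)) xs \<in> W" for p
    using assms(5,6) by (intro brk_mem_subspace[OF assms(1-4)]) simp_all
  then show ?thesis
    unfolding ubr_def by (intro subspace_sum[OF assms(2)])
qed

theorem proposition5p1:
  fixes sc :: "'k::field_char_0 \<Rightarrow> 'g::ab_group_add \<Rightarrow> 'g"
    and G0 G1 H E :: "'g set" and br :: "'g \<Rightarrow> 'g \<Rightarrow> 'g"
    and A B :: "nat \<Rightarrow> 'g list \<Rightarrow> 'g"
  assumes "lie_superalgebra sc G0 G1 br"
    and "module.subspace sc H" and "module.subspace sc E"
    and "H \<inter> E = {0}" and "\<forall>x. \<exists>h\<in>H. \<exists>e\<in>E. x = h + e"
    and "\<forall>h\<in>H. pproj G0 G1 False h \<in> H"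
    and "\<forall>x\<in>H. \<forall>y\<in>H. br x y \<in> H"
    and "A \<in> Sspan sc G0 G1" and "B \<in> Sspan sc G0 G1"
  shows "ubr sc G0 G1 br (uproj H E A) (uproj H E B)
       = uproj H E (ubr sc G0 G1 br (uproj H E A) (uproj H E B))"
proof -
  have V: "vector_space sc" using assms(1) by (simp add: lie_superalgebra_def)
  have M: "module sc" using V by (simp add: module_iff_vector_space)
  interpret module sc by (fact M)
  have parity_closed: "\<forall>e. \<forall>h\<in>H. pproj G0 G1 e h \<in> H"
    using pproj_mem_graded_subspace[OF assms(1,2,6)] by blast
  have H_valued: "\<forall>n zs. uproj H E C n zs \<in> H" for C
    unfolding uproj_def using hproj_mem[OF M assms(2-5)] by blast
  have "hproj H E (ubr sc G0 G1 br (uproj H E A) (uproj H E B) n xs)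
      = ubr sc G0 G1 br (uproj H E A) (uproj H E B) n xs" for n xs
    using ubr_mem_subspace[OF V assms(2,7) parity_closed H_valued H_valued]
    by (intro hproj_eq[OF M assms(2-4)]) (simp_all add: subspace_0[OF assms(3)])
  then show ?thesis
    unfolding uproj_def[of H E "ubr sc G0 G1 br (uproj H E A) (uproj H E B)"] by simp
qed

end
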